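(* Let $0<a<b<1$. There exist $c_1,c_2,c_3,c_4,R_0>0$ such that for every $R\ge R_0$ there exists a family $(F_\alpha)_{\alpha\in A}$ of $C^2$ diffeomorphisms onto their images $F_\alpha:\mathbb{R}\times[-R^a,2R^a]\to\mathbb{R}^2$ with $F_\alpha(0)=0$, satisfying: 1. $|A|\ge\exp(c_1R^{1-b})$; 2. for any distinct $\alpha,\alpha'\in A$, either there is a continuous path contained in $F_\alpha([0,R]\times\{0\})\cap F_{\alpha'}([0,R]\times[0,R^a])$ going from $0$ to $F_{\alpha'}([0,R]\times\{R^a\})$, or the same holds with $\alpha$ and $\alpha'$ interchanged; 3. for every $\alpha\in A$ and $x\in\mathbb{R}\times[-R^a,2R^a]$: (i) $|d^2_xF_\alpha|\le c_2R^{2(a-b)}$; (ii) there is $J^\alpha_x\in O(2)$ with $|d_xF_\alpha-J^\alpha_x|\le c_3R^{2(a-b)}$; (iii) for every $y\in\mathbb{R}\times[-R^a,2R^a]$, $|x-y|/c_4\le|F_\alpha(x)-F_\alpha(y)|\le c_4|x-y|$. *)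

theory Defs
  imports "HOL-Analysis.Analysis"
begin

text \<open>Points of the plane are elements of real^2; coordinate 1 is the first
  (horizontal) coordinate, coordinate 2 the second.\<close>

definition strip :: "real \<Rightarrow> (real^2) set" where
  "strip h = {x. - h \<le> x$2 \<and> x$2 \<le> 2 * h}"

definition C2_with :: "'a::euclidean_space set \<Rightarrow> ('a \<Rightarrow> 'b::euclidean_space)
    \<Rightarrow> ('a \<Rightarrow> 'a \<Rightarrow>\<^sub>L 'b) \<Rightarrow> ('a \<Rightarrow> 'a \<Rightarrow>\<^sub>L 'a \<Rightarrow>\<^sub>L 'b) \<Rightarrow> bool" where
  "C2_with S f Df D2f \<longleftrightarrow>
     (\<forall>x\<in>S. (f has_derivative blinfun_apply (Df x)) (at x within S) \<and>
             (Df has_derivative blinfun_apply (D2f x)) (at x within S)) \<and>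
     continuous_on S D2f"

definition C2_on :: "'a::euclidean_space set \<Rightarrow> ('a \<Rightarrow> 'b::euclidean_space) \<Rightarrow> bool" where
  "C2_on S f \<longleftrightarrow> (\<exists>Df D2f. C2_with S f Df D2f)"

definition C2_diffeo_onto_image :: "'a::euclidean_space set \<Rightarrow> ('a \<Rightarrow> 'b::euclidean_space) \<Rightarrow> bool" where
  "C2_diffeo_onto_image S f \<longleftrightarrow> inj_on f S \<and> C2_on S f \<and> C2_on (f ` S) (inv_into S f)"

definition path_in_from_to :: "(real^2) set \<Rightarrow> real^2 \<Rightarrow> (real^2) set \<Rightarrow> bool" where
  "path_in_from_to K p T \<longleftrightarrow>
     (\<exists>g. path g \<and> path_image g \<subseteq> K \<and> pathstart g = p \<and> pathfinish g \<in> T)"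

end

theory Submission
  imports Defs
begin

text \<open>
  If the first three derivatives of a profile g are small compared with the width h of a
  horizontal strip, the normal chart (x, y) \<mapsto> (x - y g'(x), y + g(x)), i.e. the graph of g
  thickened along its normals, is a perturbation of the identity on the strip: a 2-bi-Lipschitz
  C^2 diffeomorphism whose derivative is close to a rotation and whose second derivative is small.
  The charts of the theorem are normal charts of staircases of height H = R^a with steps of width
  L = R^b, one step (rising by 2H across [j L, (j + 1) L]) for each j in a subset B of
  {0, ..., N - 1}, N = \<lfloor>R^(1-b)\<rfloor>; all the errors are then O((H/L)^2) = O(R^(2(a-b))), and
  there are 2^N \<ge> exp(R^(1-b)/4) of them. If B and B' first differ at k, say k \<in> B, the two
  staircases coincide up to k L, and on the first half of the k-th step the graph of the
  B-staircase rises by H above the flat B'-staircase: the bottom edge of the B-chart climbs,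
  inside the B'-chart, from 0 to its top edge.
\<close>

section \<open>Two-by-two matrices as bounded linear maps\<close>

definition mat2 :: "real \<Rightarrow> real \<Rightarrow> real \<Rightarrow> real \<Rightarrow> (real^2) \<Rightarrow>\<^sub>L (real^2)" where
  "mat2 a b c d = Blinfun (\<lambda>v. vector [a * v$1 + b * v$2, c * v$1 + d * v$2])"

lemma bounded_linear_mat2:
  "bounded_linear (\<lambda>v::real^2. vector [a * v$1 + b * v$2, c * v$1 + d * v$2] :: real^2)"
proof -
  have "linear (\<lambda>v::real^2. vector [a * v$1 + b * v$2, c * v$1 + d * v$2] :: real^2)"
    by (rule linearI) (auto simp: vec_eq_iff forall_2 algebra_simps)
  then show ?thesis by (simp add: linear_conv_bounded_linear)
qed

lemma mat2_apply:
  "blinfun_apply (mat2 a b c d) v = vector [a * v$1 + b * v$2, c * v$1 + d * v$2]"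
  unfolding mat2_def by (simp add: bounded_linear_Blinfun_apply[OF bounded_linear_mat2])

lemma mat2_apply_1 [simp]: "blinfun_apply (mat2 a b c d) v $ 1 = a * v$1 + b * v$2"
  and mat2_apply_2 [simp]: "blinfun_apply (mat2 a b c d) v $ 2 = c * v$1 + d * v$2"
  by (simp_all add: mat2_apply)

lemma mat2_eq_units:
  "mat2 a b c d = a *\<^sub>R mat2 1 0 0 0 + b *\<^sub>R mat2 0 1 0 0 + c *\<^sub>R mat2 0 0 1 0 + d *\<^sub>R mat2 0 0 0 1"
  by (rule blinfun_eqI) (simp add: vec_eq_iff forall_2 plus_blinfun.rep_eq scaleR_blinfun.rep_eq)

lemma mat2_diff: "mat2 a b c d - mat2 a' b' c' d' = mat2 (a - a') (b - b') (c - c') (d - d')"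
  by (rule blinfun_eqI) (simp add: vec_eq_iff forall_2 minus_blinfun.rep_eq algebra_simps)

lemma norm_vec2_le: "norm (v::real^2) \<le> \<bar>v$1\<bar> + \<bar>v$2\<bar>"
  using norm_le_l1_cart[of v] by (simp add: UNIV_2)

lemma norm_vector2_le: "norm (vector [a, b] :: real^2) \<le> \<bar>a\<bar> + \<bar>b\<bar>"
  using norm_vec2_le[of "vector [a, b]"] by simp

lemma inner_vec2: "(x::real^2) \<bullet> y = x$1 * y$1 + x$2 * y$2"
  by (simp add: inner_vec_def UNIV_2)

lemma norm_mat2_le: "norm (mat2 a b c d) \<le> \<bar>a\<bar> + \<bar>b\<bar> + \<bar>c\<bar> + \<bar>d\<bar>"
proof (rule norm_blinfun_bound)
  show "0 \<le> \<bar>a\<bar> + \<bar>b\<bar> + \<bar>c\<bar> + \<bar>d\<bar>" by simp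
  fix v :: "real^2"
  have n: "\<bar>v$1\<bar> \<le> norm v" "\<bar>v$2\<bar> \<le> norm v" by (rule component_le_norm_cart)+
  have "norm (blinfun_apply (mat2 a b c d) v) \<le> \<bar>a * v$1 + b * v$2\<bar> + \<bar>c * v$1 + d * v$2\<bar>"
    using norm_vec2_le[of "blinfun_apply (mat2 a b c d) v"] by simp
  also have "\<dots> \<le> (\<bar>a\<bar> * \<bar>v$1\<bar> + \<bar>b\<bar> * \<bar>v$2\<bar>) + (\<bar>c\<bar> * \<bar>v$1\<bar> + \<bar>d\<bar> * \<bar>v$2\<bar>)"
    by (intro add_mono) (auto intro: order_trans[OF abs_triangle_ineq] simp: abs_mult)
  also have "\<dots> \<le> (\<bar>a\<bar> * norm v + \<bar>b\<bar> * norm v) + (\<bar>c\<bar> * norm v + \<bar>d\<bar> * norm v)"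
    by (intro add_mono mult_left_mono n) auto
  finally show "norm (blinfun_apply (mat2 a b c d) v) \<le> (\<bar>a\<bar> + \<bar>b\<bar> + \<bar>c\<bar> + \<bar>d\<bar>) * norm v"
    by (simp add: algebra_simps)
qed

lemma continuous_on_mat2:
  assumes "continuous_on S f1" "continuous_on S f2" "continuous_on S f3" "continuous_on S f4"
  shows "continuous_on S (\<lambda>x. mat2 (f1 x) (f2 x) (f3 x) (f4 x))"
  by (subst mat2_eq_units) (intro continuous_on_add continuous_on_scaleR continuous_on_const assms)

definition mat2_grad ::
    "real^2 \<Rightarrow> real^2 \<Rightarrow> real^2 \<Rightarrow> real^2 \<Rightarrow> (real^2) \<Rightarrow>\<^sub>L (real^2) \<Rightarrow>\<^sub>L (real^2)" where
  "mat2_grad u1 u2 u3 u4 =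
     Blinfun (\<lambda>k. (u1 \<bullet> k) *\<^sub>R mat2 1 0 0 0 + (u2 \<bullet> k) *\<^sub>R mat2 0 1 0 0 +
                  (u3 \<bullet> k) *\<^sub>R mat2 0 0 1 0 + (u4 \<bullet> k) *\<^sub>R mat2 0 0 0 1)"

lemma bounded_linear_mat2_grad:
  "bounded_linear (\<lambda>k. (u1 \<bullet> k) *\<^sub>R mat2 1 0 0 0 + (u2 \<bullet> k) *\<^sub>R mat2 0 1 0 0 +
                       (u3 \<bullet> k) *\<^sub>R mat2 0 0 1 0 + (u4 \<bullet> k) *\<^sub>R mat2 0 0 0 1)"
  by (intro bounded_linear_add bounded_linear_compose[OF bounded_linear_scaleR_left]
      bounded_linear_inner_right)

lemma mat2_grad_apply:
  "blinfun_apply (mat2_grad u1 u2 u3 u4) k = mat2 (u1 \<bullet> k) (u2 \<bullet> k) (u3 \<bullet> k) (u4 \<bullet> k)"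
  unfolding mat2_grad_def bounded_linear_Blinfun_apply[OF bounded_linear_mat2_grad]
  by (subst (5) mat2_eq_units) simp

lemma norm_mat2_grad_le: "norm (mat2_grad u1 u2 u3 u4) \<le> norm u1 + norm u2 + norm u3 + norm u4"
proof (rule norm_blinfun_bound)
  show "0 \<le> norm u1 + norm u2 + norm u3 + norm u4" by simp
  fix k :: "real^2"
  have "norm (blinfun_apply (mat2_grad u1 u2 u3 u4) k) \<le>
        \<bar>u1 \<bullet> k\<bar> + \<bar>u2 \<bullet> k\<bar> + \<bar>u3 \<bullet> k\<bar> + \<bar>u4 \<bullet> k\<bar>"
    unfolding mat2_grad_apply by (rule norm_mat2_le)
  also have "\<dots> \<le> norm u1 * norm k + norm u2 * norm k + norm u3 * norm k + norm u4 * norm k"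
    by (intro add_mono Cauchy_Schwarz_ineq2)
  finally show "norm (blinfun_apply (mat2_grad u1 u2 u3 u4) k) \<le>
      (norm u1 + norm u2 + norm u3 + norm u4) * norm k"
    by (simp add: algebra_simps)
qed

lemma has_derivative_mat2:
  assumes "(f1 has_derivative (\<lambda>k. u1 \<bullet> k)) F" "(f2 has_derivative (\<lambda>k. u2 \<bullet> k)) F"
      and "(f3 has_derivative (\<lambda>k. u3 \<bullet> k)) F" "(f4 has_derivative (\<lambda>k. u4 \<bullet> k)) F"
  shows "((\<lambda>x. mat2 (f1 x) (f2 x) (f3 x) (f4 x)) has_derivative
           blinfun_apply (mat2_grad u1 u2 u3 u4)) F"
proof -
  have "((\<lambda>x. f1 x *\<^sub>R mat2 1 0 0 0 + f2 x *\<^sub>R mat2 0 1 0 0 +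
              f3 x *\<^sub>R mat2 0 0 1 0 + f4 x *\<^sub>R mat2 0 0 0 1)
     has_derivative (\<lambda>k. (u1 \<bullet> k) *\<^sub>R mat2 1 0 0 0 + (u2 \<bullet> k) *\<^sub>R mat2 0 1 0 0 +
                        (u3 \<bullet> k) *\<^sub>R mat2 0 0 1 0 + (u4 \<bullet> k) *\<^sub>R mat2 0 0 0 1)) F"
    by (intro has_derivative_add has_derivative_scaleR_left assms)
  then show ?thesis
    unfolding mat2_grad_def bounded_linear_Blinfun_apply[OF bounded_linear_mat2_grad]
    by (subst mat2_eq_units) simp
qed

definition rot :: "real \<Rightarrow> (real^2) \<Rightarrow>\<^sub>L (real^2)" where
  "rot t = mat2 (1 / sqrt (1 + t\<^sup>2)) (- (t / sqrt (1 + t\<^sup>2))) (t / sqrt (1 + t\<^sup>2)) (1 / sqrt (1 + t\<^sup>2))"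

lemma orthogonal_transformation_rot: "orthogonal_transformation (blinfun_apply (rot t))"
proof -
  define r where "r = sqrt (1 + t\<^sup>2)"
  have r2: "r\<^sup>2 = 1 + t\<^sup>2" and rpos: "r > 0"
    unfolding r_def by (simp_all add: add_pos_nonneg)
  have "blinfun_apply (rot t) v \<bullet> blinfun_apply (rot t) w = v \<bullet> w" for v w
  proof -
    have "blinfun_apply (rot t) v \<bullet> blinfun_apply (rot t) w
        = ((v$1 - t * v$2) * (w$1 - t * w$2) + (t * v$1 + v$2) * (t * w$1 + w$2)) / r\<^sup>2"
      unfolding inner_vec2 rot_def r_def[symmetric] using rpos
      by (simp add: field_simps power2_eq_square)
    also have "\<dots> = (v$1 * w$1 + v$2 * w$2) * (1 + t\<^sup>2) / r\<^sup>2"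
      by (simp add: algebra_simps power2_eq_square)
    also have "\<dots> = v \<bullet> w"
      using r2 rpos by (simp add: inner_vec2 add_nonneg_eq_0_iff)
    finally show ?thesis .
  qed
  then show ?thesis
    unfolding orthogonal_transformation_def by (simp add: blinfun.bounded_linear_right bounded_linear.linear)
qed

lemma rot_entries_close:
  assumes "\<bar>t\<bar> \<le> 1"
  shows "\<bar>1 - 1 / sqrt (1 + t\<^sup>2)\<bar> \<le> t\<^sup>2" "\<bar>t - t / sqrt (1 + t\<^sup>2)\<bar> \<le> t\<^sup>2"
proof -
  define r where "r = sqrt (1 + t\<^sup>2)"
  have r1: "1 \<le> r" unfolding r_def by simp
  have "1 + t\<^sup>2 \<le> (1 + t\<^sup>2)\<^sup>2"
    using mult_left_mono[of 1 "1 + t\<^sup>2" "1 + t\<^sup>2"] by (simp add: power2_eq_square)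
  then have "r \<le> sqrt ((1 + t\<^sup>2)\<^sup>2)"
    unfolding r_def by (rule real_sqrt_le_mono)
  then have "r \<le> 1 + t\<^sup>2" by simp
  moreover have "1 * t\<^sup>2 \<le> r * t\<^sup>2" using r1 by (intro mult_right_mono) auto
  ultimately have a: "0 \<le> 1 - 1/r \<and> 1 - 1/r \<le> t\<^sup>2" using r1 by (simp add: field_simps)
  then show "\<bar>1 - 1 / sqrt (1 + t\<^sup>2)\<bar> \<le> t\<^sup>2" unfolding r_def[symmetric] by simp
  have "t - t / r = t * (1 - 1/r)" by (simp add: algebra_simps)
  then have "\<bar>t - t / r\<bar> = \<bar>t\<bar> * (1 - 1/r)" using a by (simp add: abs_mult)
  also have "\<dots> \<le> 1 * t\<^sup>2" using a assms by (intro mult_mono) auto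
  finally show "\<bar>t - t / sqrt (1 + t\<^sup>2)\<bar> \<le> t\<^sup>2" unfolding r_def[symmetric] by simp
qed

lemma has_derivative_vec_nth: "((\<lambda>x::real^2. x$i) has_derivative (\<lambda>k. k$i)) F"
  by (rule bounded_linear_imp_has_derivative) (rule bounded_linear_vec_nth)

lemma has_derivative_real_compose:
  assumes "(g has_real_derivative d) (at (f x))" "(f has_derivative f') (at x within S)"
  shows "((\<lambda>x. g (f x)) has_derivative (\<lambda>k. d * f' k)) (at x within S)"
  using has_derivative_compose[OF assms(2) assms(1)[unfolded has_field_derivative_def]] by simp

lemma vector2_eq_units: "(vector [a, b] :: real^2) = a *\<^sub>R vector [1,0] + b *\<^sub>R vector [0,1]"
  by (simp add: vec_eq_iff forall_2)

lemma has_derivative_vector2: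
  assumes "(f1 has_derivative f1') F" "(f2 has_derivative f2') F"
  shows "((\<lambda>x. vector [f1 x, f2 x] :: real^2) has_derivative (\<lambda>k. vector [f1' k, f2' k])) F"
  by (subst vector2_eq_units, subst (2) vector2_eq_units)
    (intro has_derivative_add has_derivative_scaleR_left assms)

lemma continuous_on_vector2:
  assumes "continuous_on S f" "continuous_on S g"
  shows "continuous_on S (\<lambda>t. vector [f t, g t] :: real^2)"
  by (subst vector2_eq_units) (intro continuous_on_add continuous_on_scaleR continuous_on_const assms)

lemma abs_diff_le_deriv_bound:
  assumes "\<And>t. (f has_real_derivative f' t) (at t)" "\<And>t. \<bar>f' t\<bar> \<le> B"
  shows "\<bar>f x - f y\<bar> \<le> B * \<bar>x - y\<bar>"
  using field_differentiable_bound[of UNIV f f' B x y] assms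
  by (auto simp: has_field_derivative_at_within)

lemma bounded_linear_conj_compose:
  "bounded_linear (\<lambda>k. - ((A o\<^sub>L blinfun_apply B (blinfun_apply A k)) o\<^sub>L A))"
proof -
  have "bounded_linear (\<lambda>k. (A o\<^sub>L blinfun_apply B (blinfun_apply A k)) o\<^sub>L A)"
    by (intro bounded_linear_compose[OF bounded_bilinear.bounded_linear_left[OF bounded_bilinear_blinfun_compose]]
        bounded_linear_compose[OF bounded_bilinear.bounded_linear_right[OF bounded_bilinear_blinfun_compose]]
        bounded_linear_compose[OF blinfun.bounded_linear_right] blinfun.bounded_linear_right)
  then show ?thesis by (rule bounded_linear_minus)
qed

section \<open>The normal chart of a flat profile\<close>

text \<open>The point of the graph of g above x, moved by y along the unnormalised normal (- g' x, 1).\<close>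

definition normal_chart :: "(real \<Rightarrow> real) \<Rightarrow> (real \<Rightarrow> real) \<Rightarrow> real^2 \<Rightarrow> real^2" where
  "normal_chart g g' p = vector [p$1 - p$2 * g' (p$1), p$2 + g (p$1)]"

locale flat_profile =
  fixes g g' g'' g''' :: "real \<Rightarrow> real" and h \<sigma> \<kappa> \<tau> :: real
  assumes g_deriv: "\<And>t. (g has_real_derivative g' t) (at t)"
      and g'_deriv: "\<And>t. (g' has_real_derivative g'' t) (at t)"
      and g''_deriv: "\<And>t. (g'' has_real_derivative g''' t) (at t)"
      and g'''_cont: "continuous_on UNIV g'''"
      and h_pos: "h > 0"
      and g'_bound: "\<And>t. \<bar>g' t\<bar> \<le> \<sigma>"
      and g''_bound: "\<And>t. \<bar>g'' t\<bar> \<le> \<kappa>"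
      and g'''_bound: "\<And>t. \<bar>g''' t\<bar> \<le> \<tau>"
      and flat: "3*h*\<kappa> + 2*\<sigma> \<le> 1/2"
begin

abbreviation F :: "real^2 \<Rightarrow> real^2" where "F \<equiv> normal_chart g g'"

definition DF :: "real^2 \<Rightarrow> (real^2) \<Rightarrow>\<^sub>L (real^2)" where
  "DF p = mat2 (1 - p$2 * g'' (p$1)) (- g' (p$1)) (g' (p$1)) 1"

definition D2F :: "real^2 \<Rightarrow> (real^2) \<Rightarrow>\<^sub>L (real^2) \<Rightarrow>\<^sub>L (real^2)" where
  "D2F p = mat2_grad (vector [- (p$2 * g''' (p$1)), - g'' (p$1)]) (vector [- g'' (p$1), 0])
                     (vector [g'' (p$1), 0]) (vector [0, 0])"

text \<open>An open neighbourhood of strip h: the inverse chart is differentiated at interior points of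
  its image, which is open by invariance of domain.\<close>

definition U :: "(real^2) set" where "U = {p. -2*h < p$2 \<and> p$2 < 3*h}"

definition jac :: "real^2 \<Rightarrow> real" where "jac p = 1 - p$2 * g'' (p$1) + (g' (p$1))\<^sup>2"

definition DF_inv :: "real^2 \<Rightarrow> (real^2) \<Rightarrow>\<^sub>L (real^2)" where
  "DF_inv p = mat2 (1 / jac p) (g' (p$1) / jac p) (- g' (p$1) / jac p) ((1 - p$2 * g'' (p$1)) / jac p)"

lemma kappa_nonneg: "0 \<le> \<kappa>" using g''_bound[of 0] by simp
lemma sigma_nonneg: "0 \<le> \<sigma>" using g'_bound[of 0] by simp
lemma h_kappa_nonneg: "0 \<le> h * \<kappa>" using h_pos kappa_nonneg by simp
lemma sigma_le_quarter: "\<sigma> \<le> 1/4" using flat h_kappa_nonneg by linarith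

lemma has_derivative_F: "(F has_derivative blinfun_apply (DF p)) (at p within S)"
proof -
  have "(F has_derivative (\<lambda>k. vector [k$1 - (p$2 * (g'' (p$1) * k$1) + k$2 * g' (p$1)),
                                        k$2 + g' (p$1) * k$1])) (at p within S)"
    unfolding normal_chart_def[abs_def]
    by (intro has_derivative_vector2 has_derivative_diff has_derivative_add has_derivative_mult
        has_derivative_vec_nth has_derivative_real_compose g_deriv g'_deriv)
  then show ?thesis
    by (rule has_derivative_eq_rhs) (simp add: fun_eq_iff DF_def vec_eq_iff forall_2 algebra_simps)
qed

lemma has_derivative_DF: "(DF has_derivative blinfun_apply (D2F p)) (at p within S)"
  unfolding DF_def[abs_def] D2F_def
proof (rule has_derivative_mat2)
  show "((\<lambda>x::real^2. 1 - x$2 * g'' (x$1)) has_derivative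
         (\<bullet>) (vector [- (p$2 * g''' (p$1)), - g'' (p$1)])) (at p within S)"
    by (rule has_derivative_eq_rhs[OF has_derivative_diff[OF has_derivative_const
          has_derivative_mult[OF has_derivative_vec_nth
            has_derivative_real_compose[OF g''_deriv has_derivative_vec_nth]]]])
      (simp add: inner_vec2 fun_eq_iff algebra_simps)
  show "((\<lambda>x::real^2. - g' (x$1)) has_derivative (\<bullet>) (vector [- g'' (p$1), 0])) (at p within S)"
    by (rule has_derivative_eq_rhs[OF has_derivative_minus[OF
          has_derivative_real_compose[OF g'_deriv has_derivative_vec_nth]]])
      (simp add: inner_vec2 fun_eq_iff)
  show "((\<lambda>x::real^2. g' (x$1)) has_derivative (\<bullet>) (vector [g'' (p$1), 0])) (at p within S)"
    by (rule has_derivative_eq_rhs[OF has_derivative_real_compose[OF g'_deriv has_derivative_vec_nth]])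
      (simp add: inner_vec2 fun_eq_iff)
  show "((\<lambda>x::real^2. 1) has_derivative (\<bullet>) (vector [0, 0])) (at p within S)"
    by (rule has_derivative_eq_rhs[OF has_derivative_const]) (simp add: inner_vec2 fun_eq_iff)
qed

lemma continuous_on_profile:
  "continuous_on S (\<lambda>p::real^2. g (p$1))" "continuous_on S (\<lambda>p::real^2. g' (p$1))"
  "continuous_on S (\<lambda>p::real^2. g'' (p$1))" "continuous_on S (\<lambda>p::real^2. g''' (p$1))"
proof -
  have c: "continuous_on UNIV g" "continuous_on UNIV g'" "continuous_on UNIV g''"
    using g_deriv g'_deriv g''_deriv by (auto intro!: continuous_at_imp_continuous_on DERIV_isCont)
  have x1: "continuous_on S (\<lambda>p::real^2. p$1)"
    by (rule linear_continuous_on[OF bounded_linear_vec_nth])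
  show "continuous_on S (\<lambda>p::real^2. g (p$1))" "continuous_on S (\<lambda>p::real^2. g' (p$1))"
    "continuous_on S (\<lambda>p::real^2. g'' (p$1))" "continuous_on S (\<lambda>p::real^2. g''' (p$1))"
    using continuous_on_compose2[OF c(1) x1 subset_UNIV] continuous_on_compose2[OF c(2) x1 subset_UNIV]
      continuous_on_compose2[OF c(3) x1 subset_UNIV] continuous_on_compose2[OF g'''_cont x1 subset_UNIV]
    by auto
qed

lemma continuous_on_D2F: "continuous_on S D2F"
proof (rule continuous_on_blinfun_componentwise)
  fix i :: "real^2"
  show "continuous_on S (\<lambda>x. blinfun_apply (D2F x) i)"
    unfolding D2F_def mat2_grad_apply inner_vec2 vector_2
    by (intro continuous_on_mat2 continuous_on_add continuous_on_mult continuous_on_minus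
        continuous_on_const continuous_on_profile)
       (rule linear_continuous_on[OF bounded_linear_vec_nth])+
qed

lemma norm_F_diff_minus_diff_le:
  assumes "\<bar>p$2\<bar> \<le> 3*h" "\<bar>q$2\<bar> \<le> 3*h"
  shows "norm (F p - F q - (p - q)) \<le> 1/2 * norm (p - q)"
proof -
  have L1: "\<bar>g' (p$1) - g' (q$1)\<bar> \<le> \<kappa> * \<bar>p$1 - q$1\<bar>"
    by (rule abs_diff_le_deriv_bound[OF g'_deriv g''_bound])
  have L0: "\<bar>g (p$1) - g (q$1)\<bar> \<le> \<sigma> * \<bar>p$1 - q$1\<bar>"
    by (rule abs_diff_le_deriv_bound[OF g_deriv g'_bound])
  have e1: "(F p - F q - (p - q))$1 = - (p$2 * (g' (p$1) - g' (q$1)) + (p$2 - q$2) * g' (q$1))"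
    by (simp add: normal_chart_def algebra_simps)
  have e2: "(F p - F q - (p - q))$2 = g (p$1) - g (q$1)"
    by (simp add: normal_chart_def algebra_simps)
  have "\<bar>p$2 * (g' (p$1) - g' (q$1))\<bar> \<le> (3*h) * (\<kappa> * \<bar>p$1 - q$1\<bar>)"
    unfolding abs_mult using h_pos by (intro mult_mono assms L1) auto
  moreover have "\<bar>(p$2 - q$2) * g' (q$1)\<bar> \<le> \<bar>p$2 - q$2\<bar> * \<sigma>"
    unfolding abs_mult by (intro mult_left_mono g'_bound) auto
  ultimately have E1:
    "\<bar>(F p - F q - (p - q))$1\<bar> \<le> 3*h*\<kappa> * \<bar>p$1 - q$1\<bar> + \<sigma> * \<bar>p$2 - q$2\<bar>"
    unfolding e1 by (smt (verit) mult.commute mult.assoc)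
  have n1: "\<bar>p$1 - q$1\<bar> \<le> norm (p - q)" "\<bar>p$2 - q$2\<bar> \<le> norm (p - q)"
    using component_le_norm_cart[of "p - q"] by auto
  have "norm (F p - F q - (p - q)) \<le> \<bar>(F p - F q - (p - q))$1\<bar> + \<bar>(F p - F q - (p - q))$2\<bar>"
    by (rule norm_vec2_le)
  also have "\<dots> \<le> (3*h*\<kappa> + \<sigma>) * \<bar>p$1 - q$1\<bar> + \<sigma> * \<bar>p$2 - q$2\<bar>"
    by (rule order_trans[OF add_mono[OF E1 L0[folded e2]]]) (simp add: algebra_simps)
  also have "\<dots> \<le> (3*h*\<kappa> + \<sigma>) * norm (p - q) + \<sigma> * norm (p - q)"
    using h_kappa_nonneg sigma_nonneg by (intro add_mono mult_left_mono n1) auto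
  also have "\<dots> = (3*h*\<kappa> + 2*\<sigma>) * norm (p - q)" by (simp add: algebra_simps)
  also have "\<dots> \<le> 1/2 * norm (p - q)" using flat by (intro mult_right_mono) auto
  finally show ?thesis .
qed

lemma F_bilipschitz:
  assumes "\<bar>p$2\<bar> \<le> 3*h" "\<bar>q$2\<bar> \<le> 3*h"
  shows "norm (p - q) / 2 \<le> norm (F p - F q)" "norm (F p - F q) \<le> 2 * norm (p - q)"
proof -
  have k: "norm (F p - F q - (p - q)) \<le> 1/2 * norm (p - q)"
    by (rule norm_F_diff_minus_diff_le[OF assms])
  have "norm (p - q) \<le> norm (F p - F q) + norm (F p - F q - (p - q))"
    using norm_triangle_ineq4[of "F p - F q" "F p - F q - (p - q)"] by simp
  then show "norm (p - q) / 2 \<le> norm (F p - F q)" using k by simp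
  have "norm (F p - F q) \<le> norm (p - q) + norm (F p - F q - (p - q))"
    using norm_triangle_ineq[of "p - q" "F p - F q - (p - q)"] by simp
  then show "norm (F p - F q) \<le> 2 * norm (p - q)" using k norm_ge_zero[of "p - q"] by linarith
qed

lemma U_abs_le: "p \<in> U \<Longrightarrow> \<bar>p$2\<bar> \<le> 3*h"
  using h_pos by (auto simp: U_def)

lemma strip_subset_U: "strip h \<subseteq> U"
  using h_pos by (auto simp: strip_def U_def)

lemma strip_abs_le: "p \<in> strip h \<Longrightarrow> \<bar>p$2\<bar> \<le> 2*h"
  using h_pos by (auto simp: strip_def)

lemma inj_on_F_U: "inj_on F U"
proof (rule inj_onI)
  fix p q assume "p \<in> U" "q \<in> U" "F p = F q"
  then show "p = q" using F_bilipschitz(1)[OF U_abs_le U_abs_le, of p q] by simp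
qed

lemma continuous_on_F: "continuous_on S F"
  by (rule has_derivative_continuous_on) (rule has_derivative_F)

lemma open_U: "open U"
proof -
  have "U = {p. -2*h < p$2} \<inter> {p::real^2. p$2 < 3*h}" by (auto simp: U_def)
  moreover have "open {p::real^2. -2*h < p$2}" "open {p::real^2. p$2 < 3*h}"
    by (intro open_Collect_less continuous_on_const linear_continuous_on bounded_linear_vec_nth)+
  ultimately show ?thesis by auto
qed

lemma open_F_image_U: "open (F ` U)"
  by (rule invariance_of_domain[OF continuous_on_F open_U inj_on_F_U])

definition G :: "real^2 \<Rightarrow> real^2" where "G = inv_into U F"

lemma G_F: "p \<in> U \<Longrightarrow> G (F p) = p"
  unfolding G_def by (rule inv_into_f_f[OF inj_on_F_U])

lemma G_in_U: "y \<in> F ` U \<Longrightarrow> G y \<in> U" and F_G: "y \<in> F ` U \<Longrightarrow> F (G y) = y"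
  unfolding G_def by (auto intro: inv_into_into f_inv_into_f)

lemma G_lipschitz: "y \<in> F ` U \<Longrightarrow> z \<in> F ` U \<Longrightarrow> norm (G y - G z) \<le> 2 * norm (y - z)"
  using F_bilipschitz(1)[OF U_abs_le[OF G_in_U] U_abs_le[OF G_in_U], of y z] F_G[of y] F_G[of z] by simp

lemma continuous_on_G: "continuous_on (F ` U) G"
proof (rule lipschitz_on_continuous_on)
  show "2-lipschitz_on (F ` U) G"
    by (rule lipschitz_onI) (auto simp: dist_norm G_lipschitz)
qed

lemma jac_ge_half: "p \<in> U \<Longrightarrow> 1/2 \<le> jac p"
proof -
  assume "p \<in> U"
  then have a: "\<bar>p$2\<bar> \<le> 3*h" by (rule U_abs_le)
  have "\<bar>p$2 * g'' (p$1)\<bar> \<le> 3*h*\<kappa>"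
    unfolding abs_mult using h_pos by (intro mult_mono a g''_bound) auto
  moreover have "0 \<le> (g' (p$1))\<^sup>2" by simp
  ultimately show ?thesis using flat sigma_nonneg unfolding jac_def by linarith
qed

lemma DF_inv_DF: "p \<in> U \<Longrightarrow> DF_inv p o\<^sub>L DF p = id_blinfun"
  and DF_DF_inv: "p \<in> U \<Longrightarrow> DF p o\<^sub>L DF_inv p = id_blinfun"
proof -
  assume "p \<in> U"
  then have d: "1 - p$2 * g'' (p$1) + (g' (p$1))\<^sup>2 \<noteq> 0"
    using jac_ge_half[of p] unfolding jac_def by auto
  show "DF_inv p o\<^sub>L DF p = id_blinfun"
    by (rule blinfun_eqI)
      (use d in \<open>simp add: DF_inv_def DF_def vec_eq_iff forall_2 jac_def divide_simps,
                 simp add: algebra_simps power2_eq_square\<close>)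
  show "DF p o\<^sub>L DF_inv p = id_blinfun"
    by (rule blinfun_eqI)
      (use d in \<open>simp add: DF_inv_def DF_def vec_eq_iff forall_2 jac_def divide_simps,
                 simp add: algebra_simps power2_eq_square\<close>)
qed

lemma differentiable_profile:
  "(\<lambda>p::real^2. g (p$1)) differentiable (at p)" "(\<lambda>p::real^2. g' (p$1)) differentiable (at p)"
  "(\<lambda>p::real^2. g'' (p$1)) differentiable (at p)" "(\<lambda>p::real^2. p$2) differentiable (at p)"
  unfolding differentiable_def
  using has_derivative_real_compose[OF g_deriv has_derivative_vec_nth]
    has_derivative_real_compose[OF g'_deriv has_derivative_vec_nth]
    has_derivative_real_compose[OF g''_deriv has_derivative_vec_nth] has_derivative_vec_nth
  by blast+

lemma DF_inv_differentiable: "p \<in> U \<Longrightarrow> DF_inv differentiable (at p)"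
proof -
  assume p: "p \<in> U"
  have "jac differentiable (at p)"
    unfolding jac_def[abs_def]
    by (intro differentiable_add differentiable_diff differentiable_mult differentiable_power
        differentiable_const differentiable_profile)
  moreover have "jac p \<noteq> 0" using jac_ge_half[OF p] by auto
  ultimately show ?thesis
    unfolding DF_inv_def[abs_def]
    by (subst mat2_eq_units, intro differentiable_add differentiable_scaleR differentiable_const)
      (intro differentiable_divide differentiable_minus differentiable_diff differentiable_mult
         differentiable_const differentiable_profile, assumption+)+
qed

text \<open>Differentiating DF_inv o DF = id identifies the derivative of DF_inv.\<close>

lemma DF_inv_derivative_eq:
  assumes p: "p \<in> U" and DN: "(DF_inv has_derivative DN) (at p)"
  shows "DN k = - ((DF_inv p o\<^sub>L D2F p k) o\<^sub>L DF_inv p)"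
proof -
  have "((\<lambda>x. DF_inv x o\<^sub>L DF x) has_derivative
         (\<lambda>k. (DF_inv p o\<^sub>L blinfun_apply (D2F p) k) + (DN k o\<^sub>L DF p))) (at p)"
    using bounded_bilinear.FDERIV[OF bounded_bilinear_blinfun_compose DN has_derivative_DF[of p UNIV]]
    by simp
  moreover have "((\<lambda>x. DF_inv x o\<^sub>L DF x) has_derivative (\<lambda>k. 0)) (at p)"
    by (rule has_derivative_transform_within_open[OF has_derivative_const open_U p])
       (simp add: DF_inv_DF)
  ultimately have "(\<lambda>k. (DF_inv p o\<^sub>L blinfun_apply (D2F p) k) + (DN k o\<^sub>L DF p)) = (\<lambda>k. 0)"
    by (rule has_derivative_unique)
  then have e: "DN k o\<^sub>L DF p = - (DF_inv p o\<^sub>L blinfun_apply (D2F p) k)"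
    by (simp add: fun_eq_iff add_eq_0_iff)
  have "\<And>v. blinfun_apply (DF p) (blinfun_apply (DF_inv p) v) = v"
    using DF_DF_inv[OF p] by (metis blinfun_apply_blinfun_compose blinfun_apply_id_blinfun)
  then have "DN k = (DN k o\<^sub>L DF p) o\<^sub>L DF_inv p"
    by (intro blinfun_eqI) simp
  then show ?thesis by (simp add: e bounded_bilinear.minus_left[OF bounded_bilinear_blinfun_compose])
qed

definition DG :: "real^2 \<Rightarrow> (real^2) \<Rightarrow>\<^sub>L (real^2)" where "DG y = DF_inv (G y)"

lemma has_derivative_G: "y \<in> F ` U \<Longrightarrow> (G has_derivative blinfun_apply (DG y)) (at y)"
proof -
  assume y: "y \<in> F ` U"
  show ?thesis
    unfolding DG_def
  proof (rule has_derivative_inverse_basic[where f = F and T = "F ` U"])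
    show "(F has_derivative blinfun_apply (DF (G y))) (at (G y))"
      using has_derivative_F[of "G y" UNIV] by simp
    show "bounded_linear (blinfun_apply (DF_inv (G y)))" by (rule blinfun.bounded_linear_right)
    have "blinfun_apply (DF_inv (G y) o\<^sub>L DF (G y)) v = v" for v
      using DF_inv_DF[OF G_in_U[OF y]] by simp
    then show "blinfun_apply (DF_inv (G y)) \<circ> blinfun_apply (DF (G y)) = id"
      by (simp add: fun_eq_iff)
    show "continuous (at y) G"
      using continuous_on_eq_continuous_at[OF open_F_image_U, of G] continuous_on_G y by blast
  qed (use y open_F_image_U F_G in auto)
qed

definition D2G :: "real^2 \<Rightarrow> (real^2) \<Rightarrow>\<^sub>L (real^2) \<Rightarrow>\<^sub>L (real^2)" where
  "D2G y = Blinfun (\<lambda>k. - ((DG y o\<^sub>L blinfun_apply (D2F (G y)) (blinfun_apply (DG y) k)) o\<^sub>L DG y))"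

lemma D2G_apply:
  "blinfun_apply (D2G y) k = - ((DG y o\<^sub>L blinfun_apply (D2F (G y)) (blinfun_apply (DG y) k)) o\<^sub>L DG y)"
  unfolding D2G_def by (simp add: bounded_linear_Blinfun_apply[OF bounded_linear_conj_compose])

lemma has_derivative_DG: "y \<in> F ` U \<Longrightarrow> (DG has_derivative blinfun_apply (D2G y)) (at y)"
proof -
  assume y: "y \<in> F ` U"
  obtain DN where DN: "(DF_inv has_derivative DN) (at (G y))"
    using DF_inv_differentiable[OF G_in_U[OF y]] unfolding differentiable_def by blast
  have "((\<lambda>y. DF_inv (G y)) has_derivative (\<lambda>k. DN (blinfun_apply (DG y) k))) (at y)"
    using has_derivative_compose[OF has_derivative_G[OF y] DN] by simp
  moreover have "(\<lambda>k. DN (blinfun_apply (DG y) k)) = blinfun_apply (D2G y)"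
    by (rule ext) (simp add: D2G_apply DF_inv_derivative_eq[OF G_in_U[OF y] DN] DG_def)
  ultimately show ?thesis unfolding DG_def[abs_def] by simp
qed

lemma continuous_on_DF_inv: "continuous_on U DF_inv"
proof -
  have jac_nz: "\<forall>p\<in>U. jac p \<noteq> 0" using jac_ge_half by fastforce
  have jac_cont: "continuous_on U jac"
    unfolding jac_def[abs_def]
    by (intro continuous_on_add continuous_on_diff continuous_on_mult continuous_on_power
        continuous_on_const continuous_on_profile linear_continuous_on bounded_linear_vec_nth)
  show ?thesis
    unfolding DF_inv_def[abs_def]
    by (intro continuous_on_mat2 continuous_on_divide continuous_on_diff continuous_on_mult
        continuous_on_minus continuous_on_const continuous_on_profile jac_cont jac_nz
        linear_continuous_on bounded_linear_vec_nth)
qed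

lemma continuous_on_D2G: "continuous_on (F ` U) D2G"
proof (rule continuous_on_blinfun_componentwise)
  fix i :: "real^2"
  have "continuous_on (F ` U) DG"
    unfolding DG_def[abs_def]
    by (rule continuous_on_compose2[OF continuous_on_DF_inv continuous_on_G]) (auto intro: G_in_U)
  moreover have "continuous_on (F ` U) (\<lambda>y. D2F (G y))"
    by (rule continuous_on_compose2[OF continuous_on_D2F continuous_on_G]) (auto intro: G_in_U)
  ultimately show "continuous_on (F ` U) (\<lambda>y. blinfun_apply (D2G y) i)"
    unfolding D2G_apply
    by (intro continuous_on_minus bounded_bilinear.continuous_on[OF bounded_bilinear_blinfun_compose]
        bounded_bilinear.continuous_on[OF bounded_bilinear_blinfun_apply] continuous_on_const)
qed

lemma C2_with_F: "C2_with S F DF D2F"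
  unfolding C2_with_def using has_derivative_F has_derivative_DF continuous_on_D2F by blast

lemma C2_with_inv_F:
  assumes "S \<subseteq> U"
  shows "C2_with (F ` S) (inv_into S F) DG D2G"
  unfolding C2_with_def
proof (intro conjI ballI)
  have sub: "F ` S \<subseteq> F ` U" using assms by auto
  fix y assume y: "y \<in> F ` S"
  have inv_eq: "inv_into S F z = G z" if "z \<in> F ` S" for z
    using that assms inv_into_f_f[OF inj_on_subset[OF inj_on_F_U assms]] G_F by auto
  have "(G has_derivative blinfun_apply (DG y)) (at y within F ` S)"
    using has_derivative_G[of y] sub y by (auto intro: has_derivative_at_withinI)
  then show "(inv_into S F has_derivative blinfun_apply (DG y)) (at y within F ` S)"
    by (rule has_derivative_transform_within[OF _ zero_less_one y]) (simp add: inv_eq)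
  show "(DG has_derivative blinfun_apply (D2G y)) (at y within F ` S)"
    using has_derivative_DG[of y] sub y by (auto intro: has_derivative_at_withinI)
next
  show "continuous_on (F ` S) D2G"
    by (rule continuous_on_subset[OF continuous_on_D2G]) (use assms in auto)
qed

lemma C2_diffeo_onto_image_F: "S \<subseteq> U \<Longrightarrow> C2_diffeo_onto_image S F"
  unfolding C2_diffeo_onto_image_def C2_on_def
  using inj_on_subset[OF inj_on_F_U] C2_with_F C2_with_inv_F by blast

lemma norm_D2F_le: "p \<in> strip h \<Longrightarrow> norm (D2F p) \<le> 2*h*\<tau> + 3*\<kappa>"
proof -
  assume p: "p \<in> strip h"
  have a: "\<bar>p$2 * g''' (p$1)\<bar> \<le> 2*h*\<tau>"
    unfolding abs_mult using strip_abs_le[OF p] h_pos g'''_bound by (intro mult_mono) auto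
  have "norm (D2F p) \<le> (\<bar>p$2 * g''' (p$1)\<bar> + \<bar>g'' (p$1)\<bar>) + \<bar>g'' (p$1)\<bar> + \<bar>g'' (p$1)\<bar> + 0"
    unfolding D2F_def
    by (rule order_trans[OF norm_mat2_grad_le])
      (intro add_mono; (rule order_trans[OF norm_vector2_le])?; simp)
  also have "\<dots> \<le> 2*h*\<tau> + 3*\<kappa>" using a g''_bound[of "p$1"] by simp
  finally show ?thesis .
qed

lemma norm_DF_minus_rot_le:
  "p \<in> strip h \<Longrightarrow> norm (DF p - rot (g' (p$1))) \<le> 2*h*\<kappa> + 4*\<sigma>\<^sup>2"
proof -
  assume p: "p \<in> strip h"
  define t where "t = g' (p$1)"
  define r where "r = sqrt (1 + t\<^sup>2)"
  have "\<bar>t\<bar> \<le> 1" using g'_bound[of "p$1"] sigma_le_quarter unfolding t_def by simp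
  note close = rot_entries_close[OF this, folded r_def]
  have ts: "t\<^sup>2 \<le> \<sigma>\<^sup>2"
    unfolding t_def using g'_bound[of "p$1"] sigma_nonneg by (metis abs_le_square_iff abs_of_nonneg)
  have a: "\<bar>p$2 * g'' (p$1)\<bar> \<le> 2*h*\<kappa>"
    unfolding abs_mult using strip_abs_le[OF p] h_pos g''_bound by (intro mult_mono) auto
  have "norm (DF p - rot t) \<le>
      \<bar>1 - p$2 * g'' (p$1) - 1 / r\<bar> + \<bar>- t + t / r\<bar> + \<bar>t - t / r\<bar> + \<bar>1 - 1 / r\<bar>"
    unfolding DF_def rot_def mat2_diff t_def[symmetric] r_def[symmetric]
    by (rule order_trans[OF norm_mat2_le]) simp
  also have "\<dots> \<le> (2*h*\<kappa> + t\<^sup>2) + t\<^sup>2 + t\<^sup>2 + t\<^sup>2"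
  proof -
    have "\<bar>1 - p$2 * g'' (p$1) - 1 / r\<bar> \<le> \<bar>1 - 1 / r\<bar> + \<bar>p$2 * g'' (p$1)\<bar>"
      using abs_triangle_ineq4[of "1 - 1 / r" "p$2 * g'' (p$1)"] by (simp add: algebra_simps)
    moreover have "\<bar>- t + t / r\<bar> = \<bar>t - t / r\<bar>" by linarith
    ultimately show ?thesis using a close by linarith
  qed
  also have "\<dots> \<le> 2*h*\<kappa> + 4*\<sigma>\<^sup>2" using ts by simp
  finally show ?thesis unfolding t_def .
qed

end

section \<open>A smooth step\<close>

lemma clamp_01_real: "clamp 0 1 (t::real) = max 0 (min 1 t)"
  unfolding clamp_def Basis_real_def by (auto simp: max_def min_def)

lemma has_real_derivative_compose_max:
  fixes Q Q' :: "real \<Rightarrow> real"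
  assumes Q: "\<And>t. (Q has_real_derivative Q' t) (at t)" and flat_at_c: "Q' c = 0"
  shows "((\<lambda>t. Q (max c t)) has_real_derivative Q' (max c t)) (at t)"
proof (cases t c rule: linorder_cases)
  case less
  have "eventually (\<lambda>s. s \<in> {..<c}) (nhds t)" using less by (intro eventually_nhds_in_open) auto
  then have "eventually (\<lambda>s. Q (max c s) = Q c) (nhds t)" by eventually_elim auto
  then show ?thesis
    using less flat_at_c by (subst DERIV_cong_ev[OF refl _ refl]) (auto intro: DERIV_const)
next
  case greater
  have "eventually (\<lambda>s. s \<in> {c<..}) (nhds t)" using greater by (intro eventually_nhds_in_open) auto
  then have "eventually (\<lambda>s. Q (max c s) = Q s) (nhds t)" by eventually_elim auto
  then show ?thesis
    using greater Q by (subst DERIV_cong_ev[OF refl _ refl]) auto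
next
  case equal
  have "((\<lambda>t. Q (max c t)) has_real_derivative 0) (at_left c)"
  proof (subst has_field_derivative_cong_eventually)
    show "eventually (\<lambda>s. Q (max c s) = Q c) (at_left c)"
      unfolding eventually_at_filter by auto
  qed (auto intro: DERIV_const)
  moreover have "((\<lambda>t. Q (max c t)) has_real_derivative 0) (at_right c)"
  proof (subst has_field_derivative_cong_eventually)
    show "eventually (\<lambda>s. Q (max c s) = Q s) (at_right c)"
      unfolding eventually_at_filter by auto
  qed (use Q[of c] flat_at_c in \<open>auto intro: has_field_derivative_at_within\<close>)
  ultimately show ?thesis
    using equal flat_at_c by (simp add: has_field_derivative_iff filterlim_at_split)
qed

lemma has_real_derivative_compose_min:
  fixes Q Q' :: "real \<Rightarrow> real"
  assumes Q: "\<And>t. (Q has_real_derivative Q' t) (at t)" and flat_at_c: "Q' c = 0"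
  shows "((\<lambda>t. Q (min c t)) has_real_derivative Q' (min c t)) (at t)"
proof -
  have "((\<lambda>s. Q (- s)) has_real_derivative - Q' (- s)) (at s)" for s
    using DERIV_chain2[OF Q DERIV_minus[OF DERIV_ident]] by simp
  from has_real_derivative_compose_max[OF this, of "- c"]
  have "((\<lambda>s. Q (- max (- c) s)) has_real_derivative - Q' (- max (- c) s)) (at s)" for s
    using flat_at_c by simp
  from DERIV_chain2[OF this DERIV_minus[OF DERIV_ident]]
  have "((\<lambda>t. Q (- max (- c) (- t))) has_real_derivative Q' (- max (- c) (- t))) (at t)"
    by simp
  moreover have "- max (- c) (- t) = min c t" for t :: real by linarith
  ultimately show ?thesis by simp
qed

lemma has_real_derivative_compose_clamp:
  fixes Q Q' :: "real \<Rightarrow> real"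
  assumes Q: "\<And>t. (Q has_real_derivative Q' t) (at t)" and "Q' 0 = 0" "Q' 1 = 0"
  shows "((\<lambda>t. Q (clamp 0 1 t)) has_real_derivative Q' (clamp 0 1 t)) (at t)"
  using has_real_derivative_compose_min[OF has_real_derivative_compose_max[OF Q]] assms(2,3)
  by (simp add: clamp_01_real)

definition "step_poly u = 35*u^4 - 84*u^5 + 70*u^6 - 20*(u::real)^7"
definition "step_poly' u = 140*u^3 - 420*u^4 + 420*u^5 - 140*(u::real)^6"
definition "step_poly'' u = 420*u^2 - 1680*u^3 + 2100*u^4 - 840*(u::real)^5"
definition "step_poly''' u = 840*u - 5040*u^2 + 8400*u^3 - 4200*(u::real)^4"

lemma has_real_derivative_step_poly: "(step_poly has_real_derivative step_poly' t) (at t)"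
  and has_real_derivative_step_poly': "(step_poly' has_real_derivative step_poly'' t) (at t)"
  and has_real_derivative_step_poly'': "(step_poly'' has_real_derivative step_poly''' t) (at t)"
  unfolding step_poly_def[abs_def] step_poly'_def[abs_def] step_poly''_def[abs_def] step_poly'''_def
  by (rule derivative_eq_intros refl | simp)+

lemma step_poly'_factor: "step_poly' u = 140 * u^3 * (1 - u)^3"
  by (simp add: step_poly'_def algebra_simps power2_eq_square power3_eq_cube power_def)

lemma step_poly_derivs_vanish:
  "step_poly' 0 = 0" "step_poly' 1 = 0" "step_poly'' 0 = 0" "step_poly'' 1 = 0"
  "step_poly''' 0 = 0" "step_poly''' 1 = 0"
  by (simp_all add: step_poly'_def step_poly''_def step_poly'''_def)

lemma step_poly_0: "step_poly 0 = 0" and step_poly_half: "step_poly (1/2) = 1/2"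
  by (simp_all add: step_poly_def power_divide)

lemma step_poly_mono: "0 \<le> a \<Longrightarrow> a \<le> b \<Longrightarrow> b \<le> 1 \<Longrightarrow> step_poly a \<le> step_poly b"
proof (rule DERIV_nonneg_imp_nondecreasing[of a b])
  fix x assume "0 \<le> a" "a \<le> x" "x \<le> b" "b \<le> 1"
  then have "0 \<le> step_poly' x" unfolding step_poly'_factor by simp
  then show "\<exists>y. (step_poly has_real_derivative y) (at x) \<and> 0 \<le> y"
    using has_real_derivative_step_poly by blast
qed

text \<open>A C^3 function rising from 0 on (-\<infinity>, 0] to 1 on [1, \<infinity>).\<close>

definition "smooth_step t = step_poly (clamp 0 1 t)"
definition "smooth_step' t = step_poly' (clamp 0 1 t)"
definition "smooth_step'' t = step_poly'' (clamp 0 1 t)"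
definition "smooth_step''' t = step_poly''' (clamp 0 1 t)"

lemma has_real_derivative_smooth_step: "(smooth_step has_real_derivative smooth_step' t) (at t)"
  and has_real_derivative_smooth_step': "(smooth_step' has_real_derivative smooth_step'' t) (at t)"
  and has_real_derivative_smooth_step'': "(smooth_step'' has_real_derivative smooth_step''' t) (at t)"
  unfolding smooth_step_def[abs_def] smooth_step'_def[abs_def] smooth_step''_def[abs_def]
    smooth_step'''_def
  by (rule has_real_derivative_compose_clamp has_real_derivative_step_poly
      has_real_derivative_step_poly' has_real_derivative_step_poly'' step_poly_derivs_vanish)+

lemma continuous_on_smooth_step: "continuous_on S smooth_step"
  using has_real_derivative_smooth_step
  by (auto intro!: continuous_at_imp_continuous_on DERIV_isCont)

lemma continuous_on_smooth_step''': "continuous_on S smooth_step'''"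
  unfolding smooth_step'''_def[abs_def] step_poly'''_def clamp_01_real by (intro continuous_intros)

lemma smooth_step_derivs_bound:
  "\<bar>smooth_step' t\<bar> \<le> 1120" "\<bar>smooth_step'' t\<bar> \<le> 5040" "\<bar>smooth_step''' t\<bar> \<le> 18480"
proof -
  define u where "u = clamp 0 1 t"
  have u: "0 \<le> u" "u \<le> 1" unfolding u_def clamp_01_real by auto
  have p: "0 \<le> u^n \<and> u^n \<le> 1" for n using u by (simp add: power_le_one)
  note pows = p[of 1] p[of 2] p[of 3] p[of 4] p[of 5] p[of 6]
  show "\<bar>smooth_step' t\<bar> \<le> 1120" "\<bar>smooth_step'' t\<bar> \<le> 5040" "\<bar>smooth_step''' t\<bar> \<le> 18480"
    unfolding smooth_step'_def smooth_step''_def smooth_step'''_def u_def[symmetric]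
      step_poly'_def step_poly''_def step_poly'''_def
    using pows u unfolding abs_le_iff by linarith+
qed

lemma smooth_step_derivs_vanish:
  "t \<le> 0 \<or> 1 \<le> t \<Longrightarrow> smooth_step' t = 0 \<and> smooth_step'' t = 0 \<and> smooth_step''' t = 0"
  by (auto simp: smooth_step'_def smooth_step''_def smooth_step'''_def clamp_01_real
      step_poly_derivs_vanish)

lemma smooth_step_nonpos: "t \<le> 0 \<Longrightarrow> smooth_step t = 0"
  by (simp add: smooth_step_def clamp_01_real step_poly_0)

lemma smooth_step_half: "smooth_step (1/2) = 1/2"
  by (simp add: smooth_step_def clamp_01_real step_poly_half)

lemma smooth_step_range: "t \<le> 1/2 \<Longrightarrow> 0 \<le> smooth_step t \<and> smooth_step t \<le> 1/2"
proof -
  assume t: "t \<le> 1/2"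
  have c: "0 \<le> clamp 0 1 t" "clamp 0 1 t \<le> 1/2" using t by (auto simp: clamp_01_real)
  have "step_poly 0 \<le> step_poly (clamp 0 1 t)" "step_poly (clamp 0 1 t) \<le> step_poly (1/2)"
    using c by (intro step_poly_mono; simp)+
  then show ?thesis by (simp add: smooth_step_def step_poly_0 step_poly_half)
qed

section \<open>Staircases\<close>

text \<open>With \<phi> = smooth_step, the staircase rises by 1 across [j L, (j + 1) L] for each j \<in> B
  and is flat elsewhere.\<close>

definition staircase :: "(real \<Rightarrow> real) \<Rightarrow> nat set \<Rightarrow> real \<Rightarrow> real \<Rightarrow> real" where
  "staircase \<phi> B L x = (\<Sum>j\<in>B. \<phi> (x / L - real j))"

lemma has_real_derivative_staircase:
  assumes "\<And>t. (\<phi> has_real_derivative \<phi>' t) (at t)" and "L \<noteq> 0"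
  shows "((\<lambda>x. c * staircase \<phi> B L x) has_real_derivative (c / L) * staircase \<phi>' B L x) (at x)"
proof -
  have "((\<lambda>x. \<phi> (x / L - real j)) has_real_derivative \<phi>' (x / L - real j) * (1 / L)) (at x)" for j
    by (rule DERIV_chain2[OF assms(1)]) (rule derivative_eq_intros refl | simp add: assms(2))+
  then have "((\<lambda>x. staircase \<phi> B L x) has_real_derivative (\<Sum>j\<in>B. \<phi>' (x / L - real j) * (1 / L))) (at x)"
    unfolding staircase_def by (rule DERIV_sum)
  then show ?thesis
    by (auto dest: DERIV_cmult[where c = c] simp: staircase_def sum_distrib_right sum_distrib_left)
qed

lemma continuous_on_staircase:
  assumes "continuous_on UNIV \<phi>" "L \<noteq> 0"
  shows "continuous_on S (\<lambda>x. c * staircase \<phi> B L x)"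
  unfolding staircase_def
  by (intro continuous_on_mult continuous_on_const continuous_on_sum continuous_on_compose2[OF assms(1)]
      continuous_on_diff continuous_on_divide continuous_on_id) (use assms in auto)

lemma shifted_unit_intervals_disjoint:
  fixes s :: real and i j :: nat
  assumes "0 < s - i" "s - i < 1" "i \<noteq> j"
  shows "s - j \<le> 0 \<or> 1 \<le> s - j"
proof (cases "j < i")
  case True then have "real j + 1 \<le> real i" by linarith
  then show ?thesis using assms by linarith
next
  case False then have "real i + 1 \<le> real j" using assms(3) by linarith
  then show ?thesis using assms by linarith
qed

lemma abs_staircase_le:
  assumes "finite B" and bound: "\<And>t. \<bar>\<phi> t\<bar> \<le> M"
    and vanish: "\<And>t. t \<le> 0 \<or> 1 \<le> t \<Longrightarrow> \<phi> t = 0"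
  shows "\<bar>staircase \<phi> B L x\<bar> \<le> M"
proof (cases "\<exists>i\<in>B. 0 < x / L - i \<and> x / L - i < 1")
  case True
  then obtain i where i: "i \<in> B" "0 < x / L - i" "x / L - i < 1" by blast
  have "staircase \<phi> B L x = \<phi> (x / L - i) + (\<Sum>j\<in>B - {i}. \<phi> (x / L - real j))"
    unfolding staircase_def using sum.remove[OF assms(1) i(1)] by simp
  also have "(\<Sum>j\<in>B - {i}. \<phi> (x / L - real j)) = 0"
    by (rule sum.neutral) (use vanish shifted_unit_intervals_disjoint[OF i(2,3)] in auto)
  finally show ?thesis using bound by simp
next
  case False
  then have "staircase \<phi> B L x = 0" unfolding staircase_def by (intro sum.neutral ballI vanish) force
  then show ?thesis using bound[of 0] by simp
qed

lemma staircase_smooth_step_eq_below: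
  assumes "finite B" "x / L \<le> real k + 1"
  shows "staircase smooth_step B L x = (\<Sum>j\<in>B \<inter> {..k}. smooth_step (x / L - real j))"
proof -
  have "(\<Sum>j\<in>B - {..k}. smooth_step (x / L - real j)) = 0"
    by (rule sum.neutral) (use assms(2) in \<open>auto intro!: smooth_step_nonpos\<close>)
  then show ?thesis
    unfolding staircase_def by (simp add: sum.Int_Diff[OF assms(1), of _ "{..k}"])
qed

lemma staircase_smooth_step_first_difference:
  assumes "finite B" "finite B'" "k \<in> B" "k \<notin> B'" "\<And>j. j < k \<Longrightarrow> (j \<in> B \<longleftrightarrow> j \<in> B')"
    and "x / L \<le> real k + 1"
  shows "staircase smooth_step B L x = staircase smooth_step B' L x + smooth_step (x / L - real k)"
proof -
  have "B \<inter> {..k} = insert k (B' \<inter> {..<k})" "B' \<inter> {..k} = B' \<inter> {..<k}"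
    using assms(3-5) by (auto simp: le_less)
  then show ?thesis
    using staircase_smooth_step_eq_below[OF assms(1,6)] staircase_smooth_step_eq_below[OF assms(2,6)]
    by simp
qed

lemma staircase_smooth_step'_eq_0:
  assumes "k \<notin> B" "real k \<le> x / L" "x / L \<le> real k + 1"
  shows "staircase smooth_step' B L x = 0"
  unfolding staircase_def
proof (rule sum.neutral, intro ballI)
  fix j assume "j \<in> B"
  then have "j \<noteq> k" using assms(1) by auto
  then have "real j + 1 \<le> real k \<or> real k + 1 \<le> real j" by linarith
  then have "x / L - real j \<le> 0 \<or> 1 \<le> x / L - real j" using assms(2,3) by auto
  then show "smooth_step' (x / L - real j) = 0" using smooth_step_derivs_vanish by blast
qed

lemma abs_staircase_smooth_step_derivs_le:
  assumes "finite B"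
  shows "\<bar>staircase smooth_step' B L x\<bar> \<le> 1120" "\<bar>staircase smooth_step'' B L x\<bar> \<le> 5040"
    "\<bar>staircase smooth_step''' B L x\<bar> \<le> 18480"
  using smooth_step_derivs_bound smooth_step_derivs_vanish by (auto intro!: abs_staircase_le[OF assms])

definition staircase_chart :: "real \<Rightarrow> real \<Rightarrow> nat set \<Rightarrow> real^2 \<Rightarrow> real^2" where
  "staircase_chart H L B =
     normal_chart (\<lambda>x. 2*H * staircase smooth_step B L x) (\<lambda>x. 2*H/L * staircase smooth_step' B L x)"

lemma staircase_chart_0: "staircase_chart H L B 0 = 0"
  by (simp add: staircase_chart_def normal_chart_def staircase_def smooth_step_nonpos vec_eq_iff forall_2)

lemma flat_profile_staircase:
  assumes H: "0 < H" and L: "0 < L" and B: "finite B"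
    and flat: "3 * H * (2*H/L/L * 5040) + 2 * (2*H/L * 1120) \<le> 1/2"
  shows "flat_profile (\<lambda>x. 2*H * staircase smooth_step B L x) (\<lambda>x. 2*H/L * staircase smooth_step' B L x)
     (\<lambda>x. 2*H/L/L * staircase smooth_step'' B L x) (\<lambda>x. 2*H/L/L/L * staircase smooth_step''' B L x)
     H (2*H/L * 1120) (2*H/L/L * 5040) (2*H/L/L/L * 18480)"
proof
  have "L \<noteq> 0" using L by simp
  note deriv = has_real_derivative_staircase[OF _ this]
  show "((\<lambda>x. 2*H * staircase smooth_step B L x) has_real_derivative
          2*H/L * staircase smooth_step' B L t) (at t)" for t
    using deriv[OF has_real_derivative_smooth_step, of "2*H" B t] by simp
  show "((\<lambda>x. 2*H/L * staircase smooth_step' B L x) has_real_derivative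
          2*H/L/L * staircase smooth_step'' B L t) (at t)" for t
    using deriv[OF has_real_derivative_smooth_step', of "2*H/L" B t] by simp
  show "((\<lambda>x. 2*H/L/L * staircase smooth_step'' B L x) has_real_derivative
          2*H/L/L/L * staircase smooth_step''' B L t) (at t)" for t
    using deriv[OF has_real_derivative_smooth_step'', of "2*H/L/L" B t] by simp
  show "continuous_on UNIV (\<lambda>x. 2*H/L/L/L * staircase smooth_step''' B L x)"
    using L by (intro continuous_on_staircase continuous_on_smooth_step''') auto
  have c: "0 \<le> 2*H/L" "0 \<le> 2*H/L/L" "0 \<le> 2*H/L/L/L" using H L by auto
  show "\<bar>2*H/L * staircase smooth_step' B L t\<bar> \<le> 2*H/L * 1120" for t
    unfolding abs_mult abs_of_nonneg[OF c(1)]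
    by (intro mult_left_mono abs_staircase_smooth_step_derivs_le B c(1))
  show "\<bar>2*H/L/L * staircase smooth_step'' B L t\<bar> \<le> 2*H/L/L * 5040" for t
    unfolding abs_mult abs_of_nonneg[OF c(2)]
    by (intro mult_left_mono abs_staircase_smooth_step_derivs_le B c(2))
  show "\<bar>2*H/L/L/L * staircase smooth_step''' B L t\<bar> \<le> 2*H/L/L/L * 18480" for t
    unfolding abs_mult abs_of_nonneg[OF c(3)]
    by (intro mult_left_mono abs_staircase_smooth_step_derivs_le B c(3))
qed (use H flat in auto)

definition crosses :: "real \<Rightarrow> real \<Rightarrow> (real^2 \<Rightarrow> real^2) \<Rightarrow> (real^2 \<Rightarrow> real^2) \<Rightarrow> bool" where
  "crosses R H f f' \<longleftrightarrow>
     path_in_from_to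
       (f ` {x. 0 \<le> x$1 \<and> x$1 \<le> R \<and> x$2 = 0} \<inter>
        f' ` {x. 0 \<le> x$1 \<and> x$1 \<le> R \<and> 0 \<le> x$2 \<and> x$2 \<le> H})
       0 (f' ` {x. 0 \<le> x$1 \<and> x$1 \<le> R \<and> x$2 = H})"

lemma path_in_from_to_along_graph:
  assumes "continuous_on UNIV g" "0 \<le> a" "g 0 = 0"
    and "\<And>x. 0 \<le> x \<Longrightarrow> x \<le> a \<Longrightarrow> vector [x, g x] \<in> K" and "vector [a, g a] \<in> T"
  shows "path_in_from_to K 0 T"
  unfolding path_in_from_to_def
proof (intro exI[of _ "\<lambda>t. vector [a * t, g (a * t)]"] conjI)
  have "continuous_on {0..1} (\<lambda>t. g (a * t))"
    using assms(1) by (rule continuous_on_compose2) (auto intro!: continuous_on_mult continuous_on_id)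
  then show "path (\<lambda>t. vector [a * t, g (a * t)] :: real^2)"
    unfolding path_def by (intro continuous_on_vector2 continuous_intros)
  have "0 \<le> a * t \<and> a * t \<le> a" if "0 \<le> t" "t \<le> 1" for t
    using that assms(2) by (simp add: mult_right_le_one_le)
  then show "path_image (\<lambda>t. vector [a * t, g (a * t)]) \<subseteq> K"
    using assms(4) by (auto simp: path_image_def)
qed (use assms(3,5) in \<open>simp_all add: pathstart_def pathfinish_def vec_eq_iff forall_2\<close>)

lemma staircase_graph_on_normal:
  assumes "finite B" "finite B'" "k \<in> B" "k \<notin> B'" "\<And>j. j < k \<Longrightarrow> (j \<in> B \<longleftrightarrow> j \<in> B')"
    and "x / L \<le> real k + 1/2"
  shows "vector [x, 2*H * staircase smooth_step B L x] =
         staircase_chart H L B' (vector [x, 2*H * smooth_step (x / L - real k)])"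
proof -
  have "staircase smooth_step B L x = staircase smooth_step B' L x + smooth_step (x / L - real k)"
    using staircase_smooth_step_first_difference[OF assms(1-5), of x L] assms(6) by simp
  moreover have "smooth_step (x / L - real k) * staircase smooth_step' B' L x = 0"
  proof (cases "x / L \<le> real k")
    case True
    then show ?thesis by (simp add: smooth_step_nonpos)
  next
    case False
    then show ?thesis using staircase_smooth_step'_eq_0[OF assms(4)] assms(6) by simp
  qed
  ultimately show ?thesis
    by (simp add: staircase_chart_def normal_chart_def vec_eq_iff forall_2 algebra_simps)
qed

lemma crosses_staircase_chart:
  assumes H: "0 < H" and L: "0 < L" and B: "finite B" "finite B'"
    and k: "k \<in> B" "k \<notin> B'" "\<And>j. j < k \<Longrightarrow> (j \<in> B \<longleftrightarrow> j \<in> B')"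
    and kR: "(real k + 1) * L \<le> R"
  shows "crosses R H (staircase_chart H L B) (staircase_chart H L B')"
proof -
  define g where "g x = 2*H * staircase smooth_step B L x" for x
  define y where "y x = 2*H * smooth_step (x / L - real k)" for x
  define a where "a = (real k + 1/2) * L"
  have a: "0 \<le> a" "a \<le> R" using L kR by (auto simp: a_def algebra_simps)
  have below_a: "x / L \<le> real k + 1/2" if "x \<le> a" for x
    using that L by (simp add: a_def divide_le_eq algebra_simps)
  have on_bottom: "vector [x, g x] = staircase_chart H L B (vector [x, 0])" for x
    by (simp add: staircase_chart_def normal_chart_def g_def)
  have on_normal: "vector [x, g x] = staircase_chart H L B' (vector [x, y x])" if "x \<le> a" for x
    unfolding g_def y_def by (rule staircase_graph_on_normal[OF B k below_a[OF that]])
  have y_range: "0 \<le> y x \<and> y x \<le> H" if "x \<le> a" for x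
  proof -
    have "x / L - real k \<le> 1/2" using below_a[OF that] by linarith
    then show ?thesis using smooth_step_range[of "x / L - real k"] H unfolding y_def by auto
  qed
  show ?thesis
    unfolding crosses_def
  proof (rule path_in_from_to_along_graph[of g a])
    show "continuous_on UNIV g"
      unfolding g_def[abs_def] using L by (intro continuous_on_staircase continuous_on_smooth_step) auto
    show "0 \<le> a" by (rule a(1))
    show "g 0 = 0" by (simp add: g_def staircase_def smooth_step_nonpos)
    have "y a = H" using L by (simp add: y_def a_def smooth_step_half field_simps)
    then show "vector [a, g a] \<in> staircase_chart H L B' ` {x. 0 \<le> x$1 \<and> x$1 \<le> R \<and> x$2 = H}"
      using on_normal[OF order_refl] a by auto
  next
    fix x assume x: "0 \<le> x" "x \<le> a"
    show "vector [x, g x] \<in> staircase_chart H L B ` {x. 0 \<le> x$1 \<and> x$1 \<le> R \<and> x$2 = 0} \<inter>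
        staircase_chart H L B' ` {x. 0 \<le> x$1 \<and> x$1 \<le> R \<and> 0 \<le> x$2 \<and> x$2 \<le> H}"
    proof
      show "vector [x, g x] \<in> staircase_chart H L B ` {x. 0 \<le> x$1 \<and> x$1 \<le> R \<and> x$2 = 0}"
        unfolding on_bottom by (rule imageI) (use x a in simp)
      show "vector [x, g x] \<in> staircase_chart H L B' ` {x. 0 \<le> x$1 \<and> x$1 \<le> R \<and> 0 \<le> x$2 \<and> x$2 \<le> H}"
        unfolding on_normal[OF x(2)] by (rule imageI) (use x a y_range[OF x(2)] in simp)
    qed
  qed
qed

lemma obtain_first_difference:
  fixes B B' :: "nat set"
  assumes "B \<noteq> B'"
  obtains k where "k \<in> B - B' \<or> k \<in> B' - B" "\<And>j. j < k \<Longrightarrow> (j \<in> B \<longleftrightarrow> j \<in> B')"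
proof -
  define D where "D = (B - B') \<union> (B' - B)"
  have "D \<noteq> {}" using assms unfolding D_def by blast
  then have "Least (\<lambda>k. k \<in> D) \<in> D" by (metis LeastI ex_in_conv)
  moreover have "j \<in> B \<longleftrightarrow> j \<in> B'" if "j < Least (\<lambda>k. k \<in> D)" for j
    using not_less_Least[OF that] unfolding D_def by blast
  ultimately show ?thesis using that unfolding D_def by blast
qed

lemma staircase_charts_cross:
  assumes "0 < H" "0 < L" "B \<subseteq> {..<N}" "B' \<subseteq> {..<N}" "B \<noteq> B'" "real N * L \<le> R"
  shows "crosses R H (staircase_chart H L B) (staircase_chart H L B') \<or>
         crosses R H (staircase_chart H L B') (staircase_chart H L B)"
proof -
  obtain k where k: "k \<in> B - B' \<or> k \<in> B' - B" "\<And>j. j < k \<Longrightarrow> (j \<in> B \<longleftrightarrow> j \<in> B')"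
    using obtain_first_difference[OF assms(5)] by blast
  have fin: "finite B" "finite B'" using assms(3,4) finite_subset by blast+
  have "real k + 1 \<le> real N" using k(1) assms(3,4) by auto
  then have "(real k + 1) * L \<le> real N * L" using assms(2) by (intro mult_right_mono) auto
  then have "(real k + 1) * L \<le> R" using assms(6) by linarith
  then show ?thesis
    using k crosses_staircase_chart[OF assms(1,2) fin] crosses_staircase_chart[OF assms(1,2) fin(2,1)]
    by blast
qed

definition C2_near_isometry ::
    "(real^2) set \<Rightarrow> real \<Rightarrow> real \<Rightarrow> real \<Rightarrow> (real^2 \<Rightarrow> real^2) \<Rightarrow> bool" where
  "C2_near_isometry S \<delta>2 \<delta>1 c f \<longleftrightarrow>
     (\<exists>Df D2f. C2_with S f Df D2f \<and>
        (\<forall>x\<in>S. norm (D2f x) \<le> \<delta>2 \<and>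
           (\<exists>J :: (real^2) \<Rightarrow>\<^sub>L (real^2).
              orthogonal_transformation (blinfun_apply J) \<and> norm (Df x - J) \<le> \<delta>1) \<and>
           (\<forall>y\<in>S. dist x y / c \<le> dist (f x) (f y) \<and> dist (f x) (f y) \<le> c * dist x y)))"

lemma staircase_flatness:
  fixes H L :: real
  assumes "0 < H" "0 < L" "H / L \<le> 1/70000"
  shows "3 * H * (2*H/L/L * 5040) + 2 * (2*H/L * 1120) \<le> 1/2"
proof -
  have e: "0 \<le> H / L" "H / L \<le> 1" using assms by auto
  have "3 * H * (2*H/L/L * 5040) + 2 * (2*H/L * 1120) = 30240 * (H/L)^2 + 4480 * (H/L)"
    by (simp add: power2_eq_square field_simps)
  also have "\<dots> \<le> 30240 * (H/L) + 4480 * (H/L)"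
    using mult_right_mono[OF e(2) e(1)] by (simp add: power2_eq_square)
  also have "\<dots> \<le> 1/2" using assms(3) by simp
  finally show ?thesis .
qed

text \<open>The profile has slope O(H/L), curvature O(H/L^2) and third derivative O(H/L^3), so for
  H, L \<ge> 1 the bounds on D2F and on DF - rot obtained in flat_profile are O((H/L)^2).\<close>

lemma staircase_chart_C2_near_isometry:
  assumes H: "1 \<le> H" and L: "1 \<le> L" and HL: "H / L \<le> 1/70000" and B: "finite B"
  shows "C2_diffeo_onto_image (strip H) (staircase_chart H L B)"
    and "C2_near_isometry (strip H) (104160 * (H/L)^2) (20090560 * (H/L)^2) 2 (staircase_chart H L B)"
proof -
  define \<sigma> where "\<sigma> = 2*H/L * 1120"
  define \<kappa> where "\<kappa> = 2*H/L/L * 5040"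
  define \<tau> where "\<tau> = 2*H/L/L/L * 18480"
  interpret S: flat_profile "\<lambda>x. 2*H * staircase smooth_step B L x"
    "\<lambda>x. 2*H/L * staircase smooth_step' B L x" "\<lambda>x. 2*H/L/L * staircase smooth_step'' B L x"
    "\<lambda>x. 2*H/L/L/L * staircase smooth_step''' B L x" H \<sigma> \<kappa> \<tau>
    unfolding \<sigma>_def \<kappa>_def \<tau>_def using H L HL B
    by (intro flat_profile_staircase staircase_flatness) auto
  have chart: "staircase_chart H L B = S.F" by (simp add: staircase_chart_def)
  show "C2_diffeo_onto_image (strip H) (staircase_chart H L B)"
    unfolding chart by (rule S.C2_diffeo_onto_image_F[OF S.strip_subset_U])
  have D2F_small: "2*H*\<tau> + 3*\<kappa> \<le> 104160 * (H/L)^2"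
  proof -
    have "2*H*\<tau> = 73920 * (H/L)^2 * (1/L)" by (simp add: \<tau>_def power2_eq_square field_simps)
    also have "\<dots> \<le> 73920 * (H/L)^2 * 1" using L by (intro mult_left_mono) auto
    finally have "2*H*\<tau> \<le> 73920 * (H/L)^2" by simp
    moreover have "3*\<kappa> = 30240 * (H/L)^2 * (1/H)" using H by (simp add: \<kappa>_def power2_eq_square field_simps)
    moreover have "\<dots> \<le> 30240 * (H/L)^2 * 1" using H by (intro mult_left_mono) auto
    ultimately show ?thesis by linarith
  qed
  have DF_near_rot: "2*H*\<kappa> + 4*\<sigma>\<^sup>2 = 20090560 * (H/L)^2"
    by (simp add: \<kappa>_def \<sigma>_def power2_eq_square field_simps)
  show "C2_near_isometry (strip H) (104160 * (H/L)^2) (20090560 * (H/L)^2) 2 (staircase_chart H L B)"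
    unfolding C2_near_isometry_def chart
  proof (intro exI[of _ S.DF] exI[of _ S.D2F] conjI ballI)
    show "C2_with (strip H) S.F S.DF S.D2F" by (rule S.C2_with_F)
    fix x assume x: "x \<in> strip H"
    show "norm (S.D2F x) \<le> 104160 * (H/L)^2" using S.norm_D2F_le[OF x] D2F_small by linarith
    show "\<exists>J :: (real^2) \<Rightarrow>\<^sub>L (real^2). orthogonal_transformation (blinfun_apply J) \<and>
        norm (S.DF x - J) \<le> 20090560 * (H/L)^2"
      using orthogonal_transformation_rot S.norm_DF_minus_rot_le[OF x] DF_near_rot by auto
    fix y assume y: "y \<in> strip H"
    have "\<bar>x$2\<bar> \<le> 3*H" "\<bar>y$2\<bar> \<le> 3*H" using S.strip_abs_le[OF x] S.strip_abs_le[OF y] H by auto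
    from S.F_bilipschitz[OF this]
    show "dist x y / 2 \<le> dist (S.F x) (S.F y)" "dist (S.F x) (S.F y) \<le> 2 * dist x y"
      by (simp_all add: dist_norm)
  qed
qed

lemma staircase_chart_family:
  assumes H: "1 \<le> H" and L: "1 \<le> L" and HL: "H / L \<le> 1/70000" and NR: "real N * L \<le> R"
  obtains A :: "nat set" and F :: "nat \<Rightarrow> real^2 \<Rightarrow> real^2"
  where "finite A" "card A = 2^N"
    and "\<And>\<alpha>. \<alpha> \<in> A \<Longrightarrow> C2_diffeo_onto_image (strip H) (F \<alpha>)"
    and "\<And>\<alpha>. \<alpha> \<in> A \<Longrightarrow> F \<alpha> 0 = 0"
    and "\<And>\<alpha>. \<alpha> \<in> A \<Longrightarrow> C2_near_isometry (strip H) (104160 * (H/L)^2) (20090560 * (H/L)^2) 2 (F \<alpha>)"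
    and "\<And>\<alpha> \<alpha>'. \<alpha> \<in> A \<Longrightarrow> \<alpha>' \<in> A \<Longrightarrow> \<alpha> \<noteq> \<alpha>' \<Longrightarrow>
           crosses R H (F \<alpha>) (F \<alpha>') \<or> crosses R H (F \<alpha>') (F \<alpha>)"
proof -
  obtain steps where steps: "bij_betw steps {..<(2::nat)^N} (Pow {..<N})"
    using finite_same_card_bij[of "{..<(2::nat)^N}" "Pow {..<N}"] by (auto simp: card_Pow)
  have sub: "steps \<alpha> \<subseteq> {..<N}" if "\<alpha> \<in> {..<2^N}" for \<alpha>
    using bij_betwE[OF steps] that by blast
  show thesis
  proof (rule that[of "{..<2^N}" "\<lambda>\<alpha>. staircase_chart H L (steps \<alpha>)"])
    fix \<alpha> assume "\<alpha> \<in> {..<(2::nat)^N}"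
    then have "finite (steps \<alpha>)" using finite_subset[OF sub finite_lessThan] by blast
    from staircase_chart_C2_near_isometry[OF H L HL this]
    show "C2_diffeo_onto_image (strip H) (staircase_chart H L (steps \<alpha>))"
      "C2_near_isometry (strip H) (104160 * (H/L)^2) (20090560 * (H/L)^2) 2 (staircase_chart H L (steps \<alpha>))"
      by blast+
  next
    fix \<alpha> \<alpha>' assume \<alpha>: "\<alpha> \<in> {..<(2::nat)^N}" "\<alpha>' \<in> {..<(2::nat)^N}" "\<alpha> \<noteq> \<alpha>'"
    then have "steps \<alpha> \<noteq> steps \<alpha>'"
      using bij_betw_imp_inj_on[OF steps] by (auto dest: inj_onD)
    then show "crosses R H (staircase_chart H L (steps \<alpha>)) (staircase_chart H L (steps \<alpha>')) \<or>
        crosses R H (staircase_chart H L (steps \<alpha>')) (staircase_chart H L (steps \<alpha>))"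
      using H L NR sub[OF \<alpha>(1)] sub[OF \<alpha>(2)] by (intro staircase_charts_cross) auto
  qed (simp_all add: staircase_chart_0)
qed

section \<open>Choice of the scales\<close>

lemma powr_le_of_powr_inverse_le:
  fixes e p R :: real
  assumes "0 < e" "p < 0" "e powr (1/p) \<le> R"
  shows "R powr p \<le> e"
proof -
  have "R powr p \<le> (e powr (1/p)) powr p" using assms by (intro powr_mono2') auto
  also have "\<dots> = e" using assms by (simp add: powr_powr)
  finally show ?thesis .
qed

lemma powr_ge_of_powr_inverse_le:
  fixes c p R :: real
  assumes "0 < c" "0 < p" "c powr (1/p) \<le> R"
  shows "c \<le> R powr p"
proof -
  have "(c powr (1/p)) powr p \<le> R powr p" using assms by (intro powr_mono2) auto
  then show ?thesis using assms by (simp add: powr_powr)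
qed

lemma exp_le_two_power_floor:
  fixes M :: real
  assumes "2 \<le> M"
  shows "exp (1/4 * M) \<le> 2 ^ nat \<lfloor>M\<rfloor>"
proof -
  have "exp (1/4 * M) \<le> exp (real (nat \<lfloor>M\<rfloor>) * (1/2))" using assms by simp linarith
  also have "\<dots> = exp (1/2) ^ nat \<lfloor>M\<rfloor>" by (rule exp_of_nat_mult)
  also have "\<dots> \<le> 2 ^ nat \<lfloor>M\<rfloor>"
  proof (rule power_mono)
    have "exp (1/2::real) ^ 2 = exp 1" by (simp add: power2_eq_square exp_add[symmetric])
    also have "\<dots> \<le> 2 ^ 2" using exp_le by simp
    finally show "exp (1/2::real) \<le> 2" by (rule power2_le_imp_le) simp
  qed simp
  finally show ?thesis .
qed

lemma staircase_chart_family_at_scale: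
  fixes a b R :: real
  assumes ab: "0 < a" "a < b" "b < 1"
    and R: "max (max 1 ((1/70000) powr (1/(a-b)))) (2 powr (1/(1-b))) \<le> R"
  shows "\<exists>(A :: nat set) (F :: nat \<Rightarrow> real^2 \<Rightarrow> real^2).
      (\<forall>\<alpha>\<in>A. C2_diffeo_onto_image (strip (R powr a)) (F \<alpha>) \<and> F \<alpha> 0 = 0) \<and>
      finite A \<and> real (card A) \<ge> exp (1/4 * R powr (1 - b)) \<and>
      (\<forall>\<alpha>\<in>A. \<forall>\<alpha>'\<in>A. \<alpha> \<noteq> \<alpha>' \<longrightarrow>
         crosses R (R powr a) (F \<alpha>) (F \<alpha>') \<or> crosses R (R powr a) (F \<alpha>') (F \<alpha>)) \<and>
      (\<forall>\<alpha>\<in>A. C2_near_isometry (strip (R powr a))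
         (104160 * R powr (2 * (a - b))) (20090560 * R powr (2 * (a - b))) 2 (F \<alpha>))"
proof -
  have R_ge: "1 \<le> R" "(1/70000) powr (1/(a-b)) \<le> R" "2 powr (1/(1-b)) \<le> R" using R by auto
  define N where "N = nat \<lfloor>R powr (1-b)\<rfloor>"
  have H1: "1 \<le> R powr a" and L1: "1 \<le> R powr b"
    using R_ge(1) ab by (simp_all add: ge_one_powr_ge_zero)
  have M2: "2 \<le> R powr (1-b)"
    by (rule powr_ge_of_powr_inverse_le[OF _ _ R_ge(3)]) (use ab in auto)
  have "R powr (a - b) \<le> 1/70000"
    by (rule powr_le_of_powr_inverse_le[OF _ _ R_ge(2)]) (use ab in auto)
  then have HL: "R powr a / R powr b \<le> 1/70000" by (simp add: powr_diff)
  have NR: "real N * R powr b \<le> R"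
  proof -
    have "real N * R powr b \<le> R powr (1-b) * R powr b"
      using M2 L1 by (intro mult_right_mono) (simp_all add: N_def)
    also have "\<dots> = R" using R_ge(1) by (simp add: powr_add[symmetric])
    finally show ?thesis .
  qed
  have sq: "(R powr a / R powr b)^2 = R powr (2*(a-b))"
    using R_ge(1) by (simp add: powr_diff[symmetric] powr_power)
  have card: "exp (1/4 * R powr (1-b)) \<le> 2^N"
    unfolding N_def by (rule exp_le_two_power_floor[OF M2])
  obtain A :: "nat set" and F :: "nat \<Rightarrow> real^2 \<Rightarrow> real^2"
    where fin: "finite A" and card_A: "card A = 2^N"
    and diffeo: "\<And>\<alpha>. \<alpha> \<in> A \<Longrightarrow> C2_diffeo_onto_image (strip (R powr a)) (F \<alpha>)"
    and zero: "\<And>\<alpha>. \<alpha> \<in> A \<Longrightarrow> F \<alpha> 0 = 0"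
    and near: "\<And>\<alpha>. \<alpha> \<in> A \<Longrightarrow> C2_near_isometry (strip (R powr a))
           (104160 * (R powr a / R powr b)^2) (20090560 * (R powr a / R powr b)^2) 2 (F \<alpha>)"
    and cross: "\<And>\<alpha> \<alpha>'. \<alpha> \<in> A \<Longrightarrow> \<alpha>' \<in> A \<Longrightarrow> \<alpha> \<noteq> \<alpha>' \<Longrightarrow>
           crosses R (R powr a) (F \<alpha>) (F \<alpha>') \<or> crosses R (R powr a) (F \<alpha>') (F \<alpha>)"
    using staircase_chart_family[OF H1 L1 HL NR] by blast
  show ?thesis
    by (intro exI[of _ A] exI[of _ F] conjI ballI impI fin diffeo zero near[unfolded sq] cross)
      (use card in \<open>simp_all add: card_A\<close>)
qed

theorem lemma3p1:
  fixes a b :: real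
  assumes "0 < a" "a < b" "b < 1"
  shows "\<exists>c1 c2 c3 c4 R0 :: real. c1 > 0 \<and> c2 > 0 \<and> c3 > 0 \<and> c4 > 0 \<and> R0 > 0 \<and>
    (\<forall>R \<ge> R0. \<exists>(A :: nat set) (F :: nat \<Rightarrow> real^2 \<Rightarrow> real^2).
       (\<forall>\<alpha>\<in>A. C2_diffeo_onto_image (strip (R powr a)) (F \<alpha>) \<and> F \<alpha> 0 = 0) \<and>
       finite A \<and> real (card A) \<ge> exp (c1 * R powr (1 - b)) \<and>
       (\<forall>\<alpha>\<in>A. \<forall>\<alpha>'\<in>A. \<alpha> \<noteq> \<alpha>' \<longrightarrow>
          path_in_from_to
            (F \<alpha> ` {x. 0 \<le> x$1 \<and> x$1 \<le> R \<and> x$2 = 0} \<inter>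
             F \<alpha>' ` {x. 0 \<le> x$1 \<and> x$1 \<le> R \<and> 0 \<le> x$2 \<and> x$2 \<le> R powr a})
            0 (F \<alpha>' ` {x. 0 \<le> x$1 \<and> x$1 \<le> R \<and> x$2 = R powr a})
          \<or>
          path_in_from_to
            (F \<alpha>' ` {x. 0 \<le> x$1 \<and> x$1 \<le> R \<and> x$2 = 0} \<inter>
             F \<alpha> ` {x. 0 \<le> x$1 \<and> x$1 \<le> R \<and> 0 \<le> x$2 \<and> x$2 \<le> R powr a})
            0 (F \<alpha> ` {x. 0 \<le> x$1 \<and> x$1 \<le> R \<and> x$2 = R powr a})) \<and>
       (\<forall>\<alpha>\<in>A. \<exists>Df D2f. C2_with (strip (R powr a)) (F \<alpha>) Df D2f \<and>
          (\<forall>x\<in>strip (R powr a).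
             norm (D2f x) \<le> c2 * R powr (2 * (a - b)) \<and>
             (\<exists>J :: (real^2) \<Rightarrow>\<^sub>L (real^2). orthogonal_transformation (blinfun_apply J) \<and>
                 norm (Df x - J) \<le> c3 * R powr (2 * (a - b))) \<and>
             (\<forall>y\<in>strip (R powr a).
                 dist x y / c4 \<le> dist (F \<alpha> x) (F \<alpha> y) \<and>
                 dist (F \<alpha> x) (F \<alpha> y) \<le> c4 * dist x y))))"
proof -
  define R0 where "R0 = max (max 1 ((1/70000) powr (1/(a-b)))) (2 powr (1/(1-b)))"
  show ?thesis
    unfolding crosses_def[symmetric] C2_near_isometry_def[symmetric]
    by (intro exI[of _ "1/4"] exI[of _ 104160] exI[of _ 20090560] exI[of _ 2] exI[of _ R0] conjI allI impI
        staircase_chart_family_at_scale[OF assms])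
      (simp_all add: R0_def)
qed

end
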